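(* Let $(\mathbf{P},\mathbf{A},\mathbf{U})$ be a two-sided matching market and let $\mathbf{M}^{\rm st}$ be its (nonempty) set of stable matchings. For every $\delta\in(0,1]$ there exist completely uncoupled policies $\pi_{\mathbf{P}}$ (used by every proposer) and $\pi_{\mathbf{A}}$ (used by every acceptor) such that the random sequence of matchings $\mu^t=\mu(a^t)$ generated by the repeated game satisfies $$\mathbb{P}\big[\mu^t\in\mathbf{M}^{\rm st}\big]>1-\delta\quad\text{for all sufficiently large } t.$$
   Context: A two-sided matching market is a tuple $(\mathbf{P},\mathbf{A},\mathbf{U})$ with disjoint finite sets of proposers $\mathbf{P}=\{P_1,\dots,P_n\}$ and acceptors $\mathbf{A}=\{A_1,\dots,A_m\}$, and utility functions $U_{P_i}:\mathbf{A}\cup\{\emptyset\}\to[0,1)$, $U_{A_j}:\mathbf{P}\cup\{\emptyset\}\to[0,1)$, each injective, with $U_{P_i}(\emptyset)=U_{A_j}(\emptyset)=0$ ($\emptyset$ means "no partner"). A matching $\mu$ is a set of pairs in $(\mathbf{P}\cup\{\emptyset\})\times(\mathbf{A}\cup\{\emptyset\})$ in which each agent appears in exactly one pair; $\mu_{P_i}$, $\mu_{A_j}$ denote partners. A pair $(P_i,A_j)$ is blocking for $\mu$ if $U_{P_i}(A_j)>U_{P_i}(\mu_{P_i})$ and $U_{A_j}(P_i)>U_{A_j}(\mu_{A_j})$; $\mu$ is stable if it has no blocking pair. Repeated game: at each time $t=1,2,\dots$: (Phase 1) each proposer $P_i$ draws an action $a^t_{P_i}\in\mathbf{A}\cup\{\emptyset\}$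 (the acceptor proposed to, or $\emptyset$ for no proposal) from a distribution $\sigma^t_{P_i}$; (Phase 2) each acceptor $A_j$ observes its proposal set $S^t_{A_j}=\{P_i: a^t_{P_i}=A_j\}$ and draws $a^t_{A_j}\in S^t_{A_j}\cup\{\emptyset\}$ from a distribution $\sigma^t_{A_j}$; (Phase 3) the induced matching $\mu(a^t)$ contains $(P_i,A_j)$ iff $a^t_{P_i}=A_j$ and $a^t_{A_j}=P_i$, all other agents are unmatched, and each agent receives utility $u^t_{P_i}=U_{P_i}(\mu_{P_i}(a^t))$, $u^t_{A_j}=U_{A_j}(\mu_{A_j}(a^t))$. Agents know $\mathbf{A}$ (resp. $\mathbf{P}$) but not their own utility functions, and observe no other agent's actions or utilities (except that acceptors observe who proposed to them). A policy is completely uncoupled if each agent's action distribution depends only on its own past observations: $\sigma^t_{P_i}=\pi_{\mathbf{P}}(\{a^\tau_{P_i},u^\tau_{P_i}\}_{\tau<t})$ and $\sigma^t_{A_j}=\pi_{\mathbf{A}}(\{S^\tau_{A_j},a^\tau_{A_j},u^\tau_{A_j}\}_{\tau<t}, S^t_{A_j})$ (the acceptor may also use its current proposal set). *)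

theory Defs
  imports "HOL-Probability.Product_PMF"
begin

text \<open>Proposers are P_0..P_(n-1) (indices i < n), acceptors A_0..A_(m-1) (indices j < m).
  Utilities are given as UP i j = U_{P_i}(A_j) and UA j i = U_{A_j}(P_i);
  the option type encodes the empty partner (None).\<close>

definition uopt :: "(nat \<Rightarrow> nat \<Rightarrow> real) \<Rightarrow> nat \<Rightarrow> nat option \<Rightarrow> real" where
  "uopt U a x = (case x of None \<Rightarrow> 0 | Some b \<Rightarrow> U a b)"

definition market :: "nat \<Rightarrow> nat \<Rightarrow> (nat \<Rightarrow> nat \<Rightarrow> real) \<Rightarrow> (nat \<Rightarrow> nat \<Rightarrow> real) \<Rightarrow> bool" where
  "market n m UP UA \<longleftrightarrow>
     (\<forall>i<n. inj_on (uopt UP i) (insert None (Some ` {..<m}))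
            \<and> (\<forall>j<m. 0 \<le> UP i j \<and> UP i j < 1)) \<and>
     (\<forall>j<m. inj_on (uopt UA j) (insert None (Some ` {..<n}))
            \<and> (\<forall>i<n. 0 \<le> UA j i \<and> UA j i < 1))"

definition is_matching :: "nat \<Rightarrow> nat \<Rightarrow> (nat \<times> nat) set \<Rightarrow> bool" where
  "is_matching n m \<mu> \<longleftrightarrow> \<mu> \<subseteq> {..<n} \<times> {..<m} \<and>
     (\<forall>i j j'. (i,j) \<in> \<mu> \<longrightarrow> (i,j') \<in> \<mu> \<longrightarrow> j = j') \<and>
     (\<forall>i i' j. (i,j) \<in> \<mu> \<longrightarrow> (i',j) \<in> \<mu> \<longrightarrow> i = i')"

definition partnerP :: "(nat \<times> nat) set \<Rightarrow> nat \<Rightarrow> nat option" where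
  "partnerP \<mu> i = (if \<exists>j. (i,j) \<in> \<mu> then Some (THE j. (i,j) \<in> \<mu>) else None)"

definition partnerA :: "(nat \<times> nat) set \<Rightarrow> nat \<Rightarrow> nat option" where
  "partnerA \<mu> j = (if \<exists>i. (i,j) \<in> \<mu> then Some (THE i. (i,j) \<in> \<mu>) else None)"

definition blocking :: "(nat \<Rightarrow> nat \<Rightarrow> real) \<Rightarrow> (nat \<Rightarrow> nat \<Rightarrow> real) \<Rightarrow> (nat \<times> nat) set \<Rightarrow> nat \<Rightarrow> nat \<Rightarrow> bool" where
  "blocking UP UA \<mu> i j \<longleftrightarrow>
     uopt UP i (Some j) > uopt UP i (partnerP \<mu> i) \<and> uopt UA j (Some i) > uopt UA j (partnerA \<mu> j)"

definition stable :: "nat \<Rightarrow> nat \<Rightarrow> (nat \<Rightarrow> nat \<Rightarrow> real) \<Rightarrow> (nat \<Rightarrow> nat \<Rightarrow> real) \<Rightarrow> (nat \<times> nat) set \<Rightarrow> bool" where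
  "stable n m UP UA \<mu> \<longleftrightarrow> \<not> (\<exists>i<n. \<exists>j<m. blocking UP UA \<mu> i j)"

definition stable_matchings :: "nat \<Rightarrow> nat \<Rightarrow> (nat \<Rightarrow> nat \<Rightarrow> real) \<Rightarrow> (nat \<Rightarrow> nat \<Rightarrow> real) \<Rightarrow> (nat \<times> nat) set set" where
  "stable_matchings n m UP UA = {\<mu>. is_matching n m \<mu> \<and> stable n m UP UA \<mu>}"

text \<open>A round records the joint action: proposer actions ap i and acceptor actions aa j.\<close>
type_synonym round = "(nat \<Rightarrow> nat option) \<times> (nat \<Rightarrow> nat option)"

definition props :: "nat \<Rightarrow> (nat \<Rightarrow> nat option) \<Rightarrow> nat \<Rightarrow> nat set" where
  "props n ap j = {i. i < n \<and> ap i = Some j}"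

definition induced :: "nat \<Rightarrow> nat \<Rightarrow> round \<Rightarrow> (nat \<times> nat) set" where
  "induced n m r = {(i,j). i < n \<and> j < m \<and> fst r i = Some j \<and> snd r j = Some i}"

definition obsP :: "nat \<Rightarrow> nat \<Rightarrow> (nat \<Rightarrow> nat \<Rightarrow> real) \<Rightarrow> round list \<Rightarrow> nat \<Rightarrow> (nat option \<times> real) list" where
  "obsP n m UP h i = map (\<lambda>r. (fst r i, uopt UP i (partnerP (induced n m r) i))) h"

definition obsA :: "nat \<Rightarrow> nat \<Rightarrow> (nat \<Rightarrow> nat \<Rightarrow> real) \<Rightarrow> round list \<Rightarrow> nat \<Rightarrow> (nat set \<times> nat option \<times> real) list" where
  "obsA n m UA h j = map (\<lambda>r. (props n (fst r) j, snd r j, uopt UA j (partnerA (induced n m r) j))) h"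

type_synonym policyP = "(nat option \<times> real) list \<Rightarrow> nat option pmf"
type_synonym policyA = "(nat set \<times> nat option \<times> real) list \<Rightarrow> nat set \<Rightarrow> nat option pmf"

definition valid_policyP :: "nat \<Rightarrow> policyP \<Rightarrow> bool" where
  "valid_policyP m \<pi> \<longleftrightarrow> (\<forall>h. set_pmf (\<pi> h) \<subseteq> insert None (Some ` {..<m}))"

definition valid_policyA :: "policyA \<Rightarrow> bool" where
  "valid_policyA \<pi> \<longleftrightarrow> (\<forall>h S. set_pmf (\<pi> h S) \<subseteq> insert None (Some ` S))"

definition round_pmf :: "nat \<Rightarrow> nat \<Rightarrow> (nat \<Rightarrow> nat \<Rightarrow> real) \<Rightarrow> (nat \<Rightarrow> nat \<Rightarrow> real)
    \<Rightarrow> policyP \<Rightarrow> policyA \<Rightarrow> round list \<Rightarrow> round pmf" where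
  "round_pmf n m UP UA \<pi>P \<pi>A h =
     bind_pmf (Pi_pmf {..<n} None (\<lambda>i. \<pi>P (obsP n m UP h i))) (\<lambda>ap.
     bind_pmf (Pi_pmf {..<m} None (\<lambda>j. \<pi>A (obsA n m UA h j) (props n ap j))) (\<lambda>aa.
     return_pmf (ap, aa)))"

primrec hist_pmf :: "nat \<Rightarrow> nat \<Rightarrow> (nat \<Rightarrow> nat \<Rightarrow> real) \<Rightarrow> (nat \<Rightarrow> nat \<Rightarrow> real)
    \<Rightarrow> policyP \<Rightarrow> policyA \<Rightarrow> nat \<Rightarrow> round list pmf" where
  "hist_pmf n m UP UA \<pi>P \<pi>A 0 = return_pmf []"
| "hist_pmf n m UP UA \<pi>P \<pi>A (Suc t) =
     bind_pmf (hist_pmf n m UP UA \<pi>P \<pi>A t) (\<lambda>h. map_pmf (\<lambda>r. h @ [r]) (round_pmf n m UP UA \<pi>P \<pi>A h))"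

end

theory Submission
  imports Defs
begin

text \<open>The policies below are deterministic, so the probability in question is 0 or 1.
  In an exploration phase of \<open>m * n\<close> rounds every proposer--acceptor pair is matched exactly once,
  after which every agent knows its own utilities. From then on the agents run deferred acceptance:
  a proposer proposes to its favourite acceptor that has not yet rejected it, and an acceptor
  accepts its favourite current proposer. The partner of an acceptor only improves, and every round
  containing a rejection creates a new rejected pair, of which there are at most \<open>n * m\<close>; so
  eventually a round without rejections occurs, and from then on the play is constant. Its
  matching is stable: a blocking pair \<open>(i, j)\<close> would mean that \<open>A\<^sub>j\<close> once rejected \<open>P\<^sub>i\<close>
  in favour of a proposer it likes better than \<open>P\<^sub>i\<close>, and hence better than its final partner.\<close>

text \<open>The guard keeps the choice inside \<open>S\<close> even for infinite \<open>S\<close>, as a valid acceptor policy requires.\<close>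

definition best :: "'a set \<Rightarrow> ('a \<Rightarrow> 'b::linorder) \<Rightarrow> 'a option" where
  "best S f = (if \<exists>x. is_arg_max f (\<lambda>x. x \<in> S) x then Some (arg_max_on f S) else None)"

lemma best_SomeD:
  assumes "best S f = Some x"
  shows "x \<in> S \<and> (\<forall>y\<in>S. f y \<le> f x)"
proof -
  have ex: "\<exists>x. is_arg_max f (\<lambda>x. x \<in> S) x" and x: "x = arg_max_on f S"
    using assms unfolding best_def by (auto split: if_splits)
  show ?thesis
    using someI_ex[OF ex] unfolding x arg_max_on_def arg_max_def is_arg_max_linorder by blast
qed

lemma best_in: "best S f \<in> insert None (Some ` S)"
  using best_SomeD[of S f] by (cases "best S f") auto

lemma best_eq_None_iff:
  assumes "finite S"
  shows "best S f = None \<longleftrightarrow> S = {}"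
proof
  show "S = {}" if none: "best S f = None"
  proof (rule ccontr)
    assume "S \<noteq> {}"
    then have "Max (f ` S) \<in> f ` S" using assms by simp
    then obtain x where x: "x \<in> S" "f x = Max (f ` S)" by auto
    then have "is_arg_max f (\<lambda>x. x \<in> S) x"
      using assms unfolding is_arg_max_linorder by auto
    then show False using none unfolding best_def by (auto split: if_splits)
  qed
qed (simp add: best_def is_arg_max_def)

lemma best_cong:
  assumes "\<And>x. x \<in> S \<Longrightarrow> f x = g x"
  shows "best S f = best S g"
proof -
  have "is_arg_max f (\<lambda>x. x \<in> S) = is_arg_max g (\<lambda>x. x \<in> S)"
    using assms unfolding is_arg_max_def by (intro ext) auto
  then show ?thesis unfolding best_def arg_max_on_def arg_max_def by simp
qed

definition det_round :: "nat \<Rightarrow> nat \<Rightarrow> (nat \<Rightarrow> nat \<Rightarrow> real) \<Rightarrow> (nat \<Rightarrow> nat \<Rightarrow> real)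
    \<Rightarrow> ((nat option \<times> real) list \<Rightarrow> nat option)
    \<Rightarrow> ((nat set \<times> nat option \<times> real) list \<Rightarrow> nat set \<Rightarrow> nat option) \<Rightarrow> round list \<Rightarrow> round" where
  "det_round n m UP UA p q h =
     (let ap = (\<lambda>i. if i < n then p (obsP n m UP h i) else None)
      in (ap, \<lambda>j. if j < m then q (obsA n m UA h j) (props n ap j) else None))"

primrec det_hist :: "nat \<Rightarrow> nat \<Rightarrow> (nat \<Rightarrow> nat \<Rightarrow> real) \<Rightarrow> (nat \<Rightarrow> nat \<Rightarrow> real)
    \<Rightarrow> ((nat option \<times> real) list \<Rightarrow> nat option)
    \<Rightarrow> ((nat set \<times> nat option \<times> real) list \<Rightarrow> nat set \<Rightarrow> nat option) \<Rightarrow> nat \<Rightarrow> round list" where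
  "det_hist n m UP UA p q 0 = []"
| "det_hist n m UP UA p q (Suc t) =
     det_hist n m UP UA p q t @ [det_round n m UP UA p q (det_hist n m UP UA p q t)]"

lemma hist_pmf_deterministic:
  "hist_pmf n m UP UA (\<lambda>ob. return_pmf (p ob)) (\<lambda>ob S. return_pmf (q ob S)) t
     = return_pmf (det_hist n m UP UA p q t)"
proof -
  have "round_pmf n m UP UA (\<lambda>ob. return_pmf (p ob)) (\<lambda>ob S. return_pmf (q ob S)) h
          = return_pmf (det_round n m UP UA p q h)" for h
    unfolding round_pmf_def det_round_def Let_def by (simp add: bind_return_pmf)
  then show ?thesis
    by (induction t) (simp_all add: bind_return_pmf map_pmf_def)
qed

lemma bounded_potential_stops:
  fixes N :: "nat \<Rightarrow> nat"
  assumes bounded: "\<And>t. t0 \<le> t \<Longrightarrow> N t \<le> B"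
    and increasing: "\<And>t. t0 \<le> t \<Longrightarrow> \<not> P t \<Longrightarrow> N t < N (Suc t)"
  shows "\<exists>t\<ge>t0. P t"
proof (rule ccontr)
  assume "\<not> (\<exists>t\<ge>t0. P t)"
  then have "k \<le> N (t0 + k)" for k
  proof (induction k)
    case (Suc k)
    then show ?case using increasing[of "t0 + k"] by simp
  qed simp
  then show False using bounded[of "t0 + Suc B"] by (metis le_add1 not_less_eq_eq)
qed

lemma constant_from_fixed_point:
  assumes step: "\<And>t. t0 \<le> t \<Longrightarrow> Q (r t) \<Longrightarrow> r (Suc t) = r t"
    and fixed: "Q (r t0)" and "t0 \<le> t"
  shows "r t = r t0"
  using \<open>t0 \<le> t\<close> by (induction t rule: dec_induct) (use step fixed in auto)

lemma market_UP_pos: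
  assumes "market n m UP UA" "i < n" "j < m"
  shows "0 < UP i j"
proof -
  have inj: "inj_on (uopt UP i) (insert None (Some ` {..<m}))" and "0 \<le> UP i j"
    using assms unfolding market_def by auto
  moreover have "uopt UP i (Some j) \<noteq> uopt UP i None"
    using inj_onD[OF inj] assms(3) by blast
  ultimately show ?thesis by (simp add: uopt_def)
qed

lemma market_UA_pos:
  assumes "market n m UP UA" "i < n" "j < m"
  shows "0 < UA j i"
proof -
  have inj: "inj_on (uopt UA j) (insert None (Some ` {..<n}))" and "0 \<le> UA j i"
    using assms unfolding market_def by auto
  moreover have "uopt UA j (Some i) \<noteq> uopt UA j None"
    using inj_onD[OF inj] assms(2) by blast
  ultimately show ?thesis by (simp add: uopt_def)
qed

lemma market_UA_inj:
  assumes "market n m UP UA" "j < m" "i < n" "i' < n" "UA j i = UA j i'"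
  shows "i = i'"
proof -
  have inj: "inj_on (uopt UA j) (insert None (Some ` {..<n}))"
    using assms unfolding market_def by auto
  have "uopt UA j (Some i) = uopt UA j (Some i')" using assms(5) by (simp add: uopt_def)
  then show ?thesis using inj_onD[OF inj] assms(3,4) by blast
qed

lemma partnerP_induced:
  "partnerP (induced n m r) i =
     (if i < n \<and> (\<exists>j<m. fst r i = Some j \<and> snd r j = Some i) then fst r i else None)"
proof (cases "\<exists>j. (i, j) \<in> induced n m r")
  case True
  then obtain j where j: "(i, j) \<in> induced n m r" by blast
  then have "(THE j. (i, j) \<in> induced n m r) = j" unfolding induced_def by auto
  then show ?thesis using j unfolding partnerP_def by (auto simp: induced_def)
qed (auto simp: partnerP_def induced_def)

lemma partnerA_induced:
  "partnerA (induced n m r) j =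
     (if j < m \<and> (\<exists>i<n. fst r i = Some j \<and> snd r j = Some i) then snd r j else None)"
proof (cases "\<exists>i. (i, j) \<in> induced n m r")
  case True
  then obtain i where i: "(i, j) \<in> induced n m r" by blast
  then have "(THE i. (i, j) \<in> induced n m r) = i" unfolding induced_def by auto
  then show ?thesis using i unfolding partnerA_def by (auto simp: induced_def)
qed (auto simp: partnerA_def induced_def)

lemma is_matching_induced: "is_matching n m (induced n m r)"
  unfolding is_matching_def induced_def by auto

section \<open>Exploration followed by deferred acceptance\<close>

definition learned_utility_P :: "(nat option \<times> real) list \<Rightarrow> nat \<Rightarrow> real" where
  "learned_utility_P ob j = Max (insert 0 {u. (Some j, u) \<in> set ob})"

definition learned_utility_A :: "(nat set \<times> nat option \<times> real) list \<Rightarrow> nat \<Rightarrow> real" where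
  "learned_utility_A ob i = Max (insert 0 {u. \<exists>S. (S, Some i, u) \<in> set ob})"

definition observed_rejections :: "nat \<Rightarrow> (nat option \<times> real) list \<Rightarrow> nat set" where
  "observed_rejections T ob = {j. \<exists>k. T \<le> k \<and> k < length ob \<and> ob ! k = (Some j, 0)}"

text \<open>In block \<open>j\<close> of the exploration phase (rounds \<open>j * n\<close> to \<open>j * n + n - 1\<close>) every proposer not yet
  accepted by \<open>A\<^sub>j\<close> proposes to it and \<open>A\<^sub>j\<close> accepts the least index. The agents do not know
  their own indices; this staggering matches \<open>P\<^sub>i\<close> with \<open>A\<^sub>j\<close> exactly in round \<open>j * n + i\<close>.
  Afterwards a zero payoff after a proposal is read as a rejection.\<close>

definition proposer_rule :: "nat \<Rightarrow> nat \<Rightarrow> (nat option \<times> real) list \<Rightarrow> nat option" where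
  "proposer_rule n m ob =
     (if length ob < m * n then
        (let j = length ob div n in if \<exists>u>0. (Some j, u) \<in> set ob then None else Some j)
      else best ({..<m} - observed_rejections (m * n) ob) (learned_utility_P ob))"

definition acceptor_rule :: "nat \<Rightarrow> nat \<Rightarrow> (nat set \<times> nat option \<times> real) list \<Rightarrow> nat set \<Rightarrow> nat option" where
  "acceptor_rule n m ob S =
     (if length ob < m * n then (if S = {} then None else Some (LEAST i. i \<in> S))
      else best S (learned_utility_A ob))"

lemma proposer_rule_exploring:
  "length ob < m * n \<Longrightarrow> proposer_rule n m ob =
     (if \<exists>u>0. (Some (length ob div n), u) \<in> set ob then None else Some (length ob div n))"
  unfolding proposer_rule_def Let_def by simp

lemma proposer_rule_learned:
  "m * n \<le> length ob \<Longrightarrow>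
     proposer_rule n m ob = best ({..<m} - observed_rejections (m * n) ob) (learned_utility_P ob)"
  unfolding proposer_rule_def by simp

lemma acceptor_rule_exploring:
  "length ob < m * n \<Longrightarrow> acceptor_rule n m ob S = (if S = {} then None else Some (LEAST i. i \<in> S))"
  unfolding acceptor_rule_def by simp

lemma acceptor_rule_learned:
  "m * n \<le> length ob \<Longrightarrow> acceptor_rule n m ob S = best S (learned_utility_A ob)"
  unfolding acceptor_rule_def by simp

lemma proposer_rule_valid: "proposer_rule n m ob \<in> insert None (Some ` {..<m})"
proof (cases "length ob < m * n")
  case True
  then have "0 < n" by (cases n) auto
  with True have "length ob div n < m"
    by (simp add: div_less_iff_less_mult mult.commute)
  then show ?thesis using True unfolding proposer_rule_def Let_def by auto
next
  case False
  then show ?thesis unfolding proposer_rule_def using best_in by fastforce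
qed

lemma acceptor_rule_valid: "acceptor_rule n m ob S \<in> insert None (Some ` S)"
proof -
  have "S \<noteq> {} \<Longrightarrow> (LEAST i. i \<in> S) \<in> S" by (metis LeastI ex_in_conv)
  then show ?thesis
    unfolding acceptor_rule_def using best_in[of S "learned_utility_A ob"] by auto
qed

definition no_rejection :: "round \<Rightarrow> bool" where
  "no_rejection r \<longleftrightarrow> (\<forall>i j. fst r i = Some j \<longrightarrow> snd r j = Some i)"

locale da_run =
  fixes n m :: nat and UP UA :: "nat \<Rightarrow> nat \<Rightarrow> real"
  assumes market: "market n m UP UA"
begin

abbreviation hist :: "nat \<Rightarrow> round list" where
  "hist \<equiv> det_hist n m UP UA (proposer_rule n m) (acceptor_rule n m)"

definition play :: "nat \<Rightarrow> round" where
  "play t = det_round n m UP UA (proposer_rule n m) (acceptor_rule n m) (hist t)"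

abbreviation propose :: "nat \<Rightarrow> nat \<Rightarrow> nat option" where
  "propose t \<equiv> fst (play t)"

abbreviation accept :: "nat \<Rightarrow> nat \<Rightarrow> nat option" where
  "accept t \<equiv> snd (play t)"

definition payoffP :: "nat \<Rightarrow> nat \<Rightarrow> real" where
  "payoffP t i = uopt UP i (partnerP (induced n m (play t)) i)"

definition payoffA :: "nat \<Rightarrow> nat \<Rightarrow> real" where
  "payoffA t j = uopt UA j (partnerA (induced n m (play t)) j)"

definition matched :: "nat \<Rightarrow> nat \<Rightarrow> nat \<Rightarrow> bool" where
  "matched t i j \<longleftrightarrow> i < n \<and> j < m \<and> propose t i = Some j \<and> accept t j = Some i"

lemma hist_eq: "hist t = map play [0..<t]"
  by (induction t) (simp_all add: play_def)

lemma propose_eq: "propose t i = (if i < n then proposer_rule n m (obsP n m UP (hist t) i) else None)"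
  unfolding play_def det_round_def Let_def by simp

lemma accept_eq:
  "accept t j = (if j < m then acceptor_rule n m (obsA n m UA (hist t) j) (props n (propose t) j) else None)"
  unfolding play_def det_round_def Let_def by simp

lemma obsP_hist: "obsP n m UP (hist t) i = map (\<lambda>k. (propose k i, payoffP k i)) [0..<t]"
  unfolding obsP_def hist_eq payoffP_def by simp

lemma obsA_hist: "obsA n m UA (hist t) j = map (\<lambda>k. (props n (propose k) j, accept k j, payoffA k j)) [0..<t]"
  unfolding obsA_def hist_eq payoffA_def by simp

lemma propose_range: "propose t i = Some j \<Longrightarrow> i < n \<and> j < m"
  using proposer_rule_valid[of n m "obsP n m UP (hist t) i"] by (auto simp: propose_eq split: if_splits)

lemma accept_range: "accept t j = Some i \<Longrightarrow> j < m \<and> i < n \<and> propose t i = Some j"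
  using acceptor_rule_valid[of n m "obsA n m UA (hist t) j" "props n (propose t) j"]
  by (fastforce simp: accept_eq props_def split: if_splits)

lemma payoffP_Some: "propose t i = Some j \<Longrightarrow> payoffP t i = (if matched t i j then UP i j else 0)"
  using propose_range[of t i j]
  by (auto simp: payoffP_def partnerP_induced matched_def uopt_def)

lemma payoffA_Some: "accept t j = Some i \<Longrightarrow> payoffA t j = (if matched t i j then UA j i else 0)"
  using accept_range[of t j i]
  by (auto simp: payoffA_def partnerA_induced matched_def uopt_def)

lemma matched_payoffP: "matched t i j \<Longrightarrow> payoffP t i = UP i j"
  using payoffP_Some matched_def by auto

lemma matched_payoffA: "matched t i j \<Longrightarrow> payoffA t j = UA j i"
  using payoffA_Some matched_def by auto

lemma observed_positive_iff_matched:
  "(\<exists>u>0. (Some j, u) \<in> set (obsP n m UP (hist t) i)) \<longleftrightarrow> (\<exists>k<t. matched k i j)"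
proof
  assume "\<exists>u>0. (Some j, u) \<in> set (obsP n m UP (hist t) i)"
  then obtain k where "k < t" "propose k i = Some j" "payoffP k i > 0"
    unfolding obsP_hist by auto
  then show "\<exists>k<t. matched k i j" using payoffP_Some by (auto split: if_splits)
next
  assume "\<exists>k<t. matched k i j"
  then obtain k where k: "k < t" "matched k i j" by blast
  then have "propose k i = Some j" "payoffP k i > 0"
    using matched_payoffP market_UP_pos[OF market] by (auto simp: matched_def)
  then show "\<exists>u>0. (Some j, u) \<in> set (obsP n m UP (hist t) i)"
    unfolding obsP_hist using k(1) by force
qed

section \<open>The exploration phase\<close>

lemma length_obsP_hist [simp]: "length (obsP n m UP (hist t) i) = t"
  unfolding obsP_hist by simp

lemma length_obsA_hist [simp]: "length (obsA n m UA (hist t) j) = t"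
  unfolding obsA_hist by simp

lemma exploration_propose:
  assumes t: "t < m * n"
    and IH: "\<And>k i j. k < t \<Longrightarrow> matched k i j \<longleftrightarrow> i = k mod n \<and> j = k div n"
  shows "propose t i = (if i < n \<and> t mod n \<le> i then Some (t div n) else None)"
proof (cases "i < n")
  case i: True
  define J where "J = t div n"
  have t_split: "t = J * n + t mod n" unfolding J_def by simp
  have "(\<exists>k<t. matched k i J) \<longleftrightarrow> i < t mod n"
  proof
    assume "\<exists>k<t. matched k i J"
    then obtain k where "k < t" "i = k mod n" "J = k div n" using IH by blast
    then show "i < t mod n" using t_split by (metis add_less_cancel_left div_mult_mod_eq mult.commute)
  next
    assume "i < t mod n"
    then have "J * n + i < t" "(J * n + i) mod n = i" "(J * n + i) div n = J"
      using i t_split by auto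
    then show "\<exists>k<t. matched k i J" using IH by metis
  qed
  then show ?thesis
    using i t observed_positive_iff_matched[of J t i]
    by (simp add: propose_eq proposer_rule_exploring J_def)
qed (simp add: propose_eq)

lemma exploration_play:
  assumes "t < m * n"
  shows "propose t i = (if i < n \<and> t mod n \<le> i then Some (t div n) else None) \<and>
         accept t j = (if j = t div n then Some (t mod n) else None)"
  using assms
proof (induction t arbitrary: i j rule: less_induct)
  case (less t)
  have n: "0 < n" using less.prems by (cases n) auto
  have J: "t div n < m" using less.prems n by (simp add: div_less_iff_less_mult mult.commute)
  have matched_before: "matched k i j \<longleftrightarrow> i = k mod n \<and> j = k div n" if "k < t" for k i j
  proof -
    have "k < m * n" using that less.prems by simp
    then have "k div n < m" using n by (simp add: div_less_iff_less_mult mult.commute)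
    then show ?thesis using less.IH[OF that] \<open>k < m * n\<close> n unfolding matched_def by auto
  qed
  have P: "propose t i' = (if i' < n \<and> t mod n \<le> i' then Some (t div n) else None)" for i'
    by (rule exploration_propose[OF less.prems matched_before])
  have "props n (propose t) j = (if j = t div n then {t mod n..<n} else {})"
    unfolding props_def by (auto simp: P)
  moreover have "(LEAST i. i \<in> {t mod n..<n}) = t mod n"
    using n by (intro Least_equality) auto
  ultimately show ?case
    using less.prems n J P by (auto simp: accept_eq acceptor_rule_exploring)
qed

lemma matched_exploration_round:
  assumes "i < n" "j < m"
  shows "j * n + i < m * n \<and> matched (j * n + i) i j"
proof -
  have "j * n + i < (j + 1) * n" using assms by simp
  also have "\<dots> \<le> m * n" using assms by (intro mult_right_mono) auto
  finally have k: "j * n + i < m * n" .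
  then show ?thesis using exploration_play[OF k, of i j] assms unfolding matched_def by simp
qed

lemma learned_utility_P_eq:
  assumes "m * n \<le> t" "i < n" "j < m"
  shows "learned_utility_P (obsP n m UP (hist t) i) j = UP i j"
proof -
  have "{u. (Some j, u) \<in> set (obsP n m UP (hist t) i)} \<subseteq> {0, UP i j}"
  proof
    fix u assume "u \<in> {u. (Some j, u) \<in> set (obsP n m UP (hist t) i)}"
    then obtain k where "propose k i = Some j" "u = payoffP k i" unfolding obsP_hist by auto
    then show "u \<in> {0, UP i j}" using payoffP_Some by simp
  qed
  moreover obtain k where "k < t" "matched k i j"
    using matched_exploration_round[OF assms(2,3)] assms(1) by (meson order.strict_trans2)
  then have "(Some j, UP i j) \<in> set (obsP n m UP (hist t) i)"
    unfolding obsP_hist using matched_payoffP by (force simp: matched_def)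
  ultimately have "insert 0 {u. (Some j, u) \<in> set (obsP n m UP (hist t) i)} = {0, UP i j}"
    by auto
  then show ?thesis
    unfolding learned_utility_P_def using market_UP_pos[OF market assms(2,3)] by simp
qed

lemma learned_utility_A_eq:
  assumes "m * n \<le> t" "i < n" "j < m"
  shows "learned_utility_A (obsA n m UA (hist t) j) i = UA j i"
proof -
  have "{u. \<exists>S. (S, Some i, u) \<in> set (obsA n m UA (hist t) j)} \<subseteq> {0, UA j i}"
  proof
    fix u assume "u \<in> {u. \<exists>S. (S, Some i, u) \<in> set (obsA n m UA (hist t) j)}"
    then obtain k where "accept k j = Some i" "u = payoffA k j" unfolding obsA_hist by auto
    then show "u \<in> {0, UA j i}" using payoffA_Some by simp
  qed
  moreover obtain k where "k < t" "matched k i j"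
    using matched_exploration_round[OF assms(2,3)] assms(1) by (meson order.strict_trans2)
  then have "\<exists>S. (S, Some i, UA j i) \<in> set (obsA n m UA (hist t) j)"
    unfolding obsA_hist using matched_payoffA by (force simp: matched_def)
  ultimately have "insert 0 {u. \<exists>S. (S, Some i, u) \<in> set (obsA n m UA (hist t) j)} = {0, UA j i}"
    by auto
  then show ?thesis
    unfolding learned_utility_A_def using market_UA_pos[OF market assms(2,3)] by simp
qed

section \<open>The deferred acceptance phase\<close>

definition rejected :: "nat \<Rightarrow> nat \<Rightarrow> nat set" where
  "rejected t i = {j. \<exists>k. m * n \<le> k \<and> k < t \<and> propose k i = Some j \<and> payoffP k i = 0}"

lemma rejected_Suc:
  "rejected (Suc t) i = rejected t i \<union> {j. m * n \<le> t \<and> propose t i = Some j \<and> payoffP t i = 0}"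
  unfolding rejected_def by (auto simp: less_Suc_eq)

lemma rejected_subset: "rejected t i \<subseteq> {..<m}"
  unfolding rejected_def using propose_range by auto

lemma propose_learned:
  assumes "m * n \<le> t"
  shows "propose t i = (if i < n then best ({..<m} - rejected t i) (UP i) else None)"
proof (cases "i < n")
  case True
  have "observed_rejections (m * n) (obsP n m UP (hist t) i) = rejected t i"
    unfolding observed_rejections_def rejected_def by (auto simp: obsP_hist)
  moreover have "best ({..<m} - rejected t i) (learned_utility_P (obsP n m UP (hist t) i))
               = best ({..<m} - rejected t i) (UP i)"
    using learned_utility_P_eq[OF assms True] by (intro best_cong) auto
  ultimately show ?thesis using True assms by (simp add: propose_eq proposer_rule_learned)
qed (simp add: propose_eq)

lemma accept_learned:
  assumes "m * n \<le> t"
  shows "accept t j = (if j < m then best (props n (propose t) j) (UA j) else None)"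
proof (cases "j < m")
  case True
  have "best (props n (propose t) j) (learned_utility_A (obsA n m UA (hist t) j))
      = best (props n (propose t) j) (UA j)"
    using learned_utility_A_eq[OF assms _ True] by (intro best_cong) (auto simp: props_def)
  then show ?thesis using True assms by (simp add: accept_eq acceptor_rule_learned)
qed (simp add: accept_eq)

lemma matched_proposes_again:
  assumes "m * n \<le> t" "matched t i j"
  shows "propose (Suc t) i = Some j"
proof -
  have "0 < UP i j" using market_UP_pos[OF market] assms(2) by (simp add: matched_def)
  then have "payoffP t i \<noteq> 0" using matched_payoffP[OF assms(2)] by simp
  then have same: "rejected (Suc t) i = rejected t i" unfolding rejected_Suc by auto
  have i: "i < n" and proposed: "propose t i = Some j" using assms(2) by (auto simp: matched_def)
  have "propose (Suc t) i = best ({..<m} - rejected (Suc t) i) (UP i)"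
    using propose_learned[of "Suc t" i] assms(1) i by simp
  also have "\<dots> = propose t i"
    using propose_learned[OF assms(1), of i] i same by simp
  finally show ?thesis using proposed by simp
qed

lemma accept_best_proposal:
  assumes "m * n \<le> t" "accept t j = Some i" "i' < n" "propose t i' = Some j"
  shows "UA j i' \<le> UA j i"
proof -
  have "best (props n (propose t) j) (UA j) = Some i"
    using accept_learned[OF assms(1), of j] assms(2) accept_range[OF assms(2)] by simp
  then show ?thesis using best_SomeD assms(3,4) by (fastforce simp: props_def)
qed

lemma proposed_acceptor_accepts:
  assumes "m * n \<le> t" "propose t i = Some j"
  shows "\<exists>i'. accept t j = Some i'"
proof -
  have "i \<in> props n (propose t) j" using assms(2) propose_range[OF assms(2)] by (simp add: props_def)
  then have "best (props n (propose t) j) (UA j) \<noteq> None"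
    by (subst best_eq_None_iff) (auto simp: props_def)
  then show ?thesis using accept_learned[OF assms(1), of j] propose_range[OF assms(2)] by auto
qed

lemma accept_improves:
  assumes "t \<le> t'" "m * n \<le> t" "accept t j = Some i"
  shows "\<exists>i'. accept t' j = Some i' \<and> UA j i \<le> UA j i'"
  using assms(1)
proof (induction t' rule: dec_induct)
  case base
  then show ?case using assms(3) by auto
next
  case (step t')
  then obtain i' where i': "accept t' j = Some i'" "UA j i \<le> UA j i'" by blast
  then have "matched t' i' j" using accept_range[OF i'(1)] by (simp add: matched_def)
  then have again: "propose (Suc t') i' = Some j"
    using matched_proposes_again step assms(2) by simp
  obtain i'' where i'': "accept (Suc t') j = Some i''"
    using proposed_acceptor_accepts[OF _ again] step assms(2) by auto
  have "UA j i' \<le> UA j i''"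
    using accept_best_proposal[OF _ i'' _ again] step assms(2) accept_range[OF i'(1)] by simp
  then show ?case using i' i'' by auto
qed

lemma rejection_by_better:
  assumes "m * n \<le> t" "propose t i = Some j" "payoffP t i = 0"
  shows "\<exists>i'. accept t j = Some i' \<and> UA j i < UA j i'"
proof -
  have r: "i < n" "j < m" using propose_range[OF assms(2)] by auto
  obtain i' where i': "accept t j = Some i'" using proposed_acceptor_accepts[OF assms(1,2)] by blast
  have le: "UA j i \<le> UA j i'" using accept_best_proposal[OF assms(1) i' r(1) assms(2)] .
  have "i' \<noteq> i"
  proof
    assume "i' = i"
    then have "matched t i j" using i' assms(2) r by (simp add: matched_def)
    then show False using matched_payoffP[of t i j] assms(3) market_UP_pos[OF market r] by simp
  qed
  then have "UA j i \<noteq> UA j i'"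
    using market_UA_inj[OF market r(2) r(1)] accept_range[OF i'] by metis
  then show ?thesis using le i' by auto
qed

lemma no_rejection_matched:
  assumes "no_rejection (play t)" "propose t i = Some j"
  shows "matched t i j"
  using assms propose_range[OF assms(2)] unfolding no_rejection_def matched_def by auto

lemma play_Suc_eq:
  assumes "m * n \<le> t" "no_rejection (play t)"
  shows "play (Suc t) = play t"
proof -
  have "rejected (Suc t) i = rejected t i" for i
  proof -
    have "payoffP t i \<noteq> 0" if "propose t i = Some j" for j
    proof -
      have m: "matched t i j" using no_rejection_matched[OF assms(2) that] .
      then have "payoffP t i = UP i j" by (rule matched_payoffP)
      moreover have "0 < UP i j" using m market_UP_pos[OF market] by (simp add: matched_def)
      ultimately show ?thesis by simp
    qed
    then show ?thesis unfolding rejected_Suc by auto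
  qed
  then have "propose (Suc t) = propose t"
    using assms(1) by (intro ext) (simp add: propose_learned)
  moreover then have "accept (Suc t) = accept t"
    using assms(1) by (intro ext) (simp add: accept_learned)
  ultimately show ?thesis by (simp add: prod_eq_iff)
qed

definition num_rejections :: "nat \<Rightarrow> nat" where
  "num_rejections t = (\<Sum>i<n. card (rejected t i))"

lemma num_rejections_bounded: "num_rejections t \<le> n * m"
proof -
  have "num_rejections t \<le> (\<Sum>i<n. m)" unfolding num_rejections_def
    using rejected_subset by (intro sum_mono) (metis card_lessThan card_mono finite_lessThan)
  then show ?thesis by simp
qed

lemma num_rejections_increases:
  assumes "m * n \<le> t" "\<not> no_rejection (play t)"
  shows "num_rejections t < num_rejections (Suc t)"
proof -
  obtain i j where a: "propose t i = Some j" "accept t j \<noteq> Some i"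
    using assms(2) unfolding no_rejection_def by blast
  have r: "i < n" "j < m" using propose_range[OF a(1)] by auto
  have "\<not> matched t i j" using a(2) by (simp add: matched_def)
  then have "payoffP t i = 0" using payoffP_Some[OF a(1)] by simp
  then have new: "rejected (Suc t) i = insert j (rejected t i)"
    using assms(1) a(1) unfolding rejected_Suc by auto
  have "propose t i = best ({..<m} - rejected t i) (UP i)"
    using propose_learned[OF assms(1), of i] r by simp
  then have "best ({..<m} - rejected t i) (UP i) = Some j" using a(1) by simp
  then have "j \<notin> rejected t i" by (auto dest: best_SomeD)
  have fin: "finite (rejected t' i')" for t' i'
    by (rule finite_subset[OF rejected_subset]) simp
  have "card (rejected t i) < card (rejected (Suc t) i)"
    unfolding new using fin \<open>j \<notin> rejected t i\<close> by simp
  moreover have "\<forall>i'\<in>{..<n}. card (rejected t i') \<le> card (rejected (Suc t) i')"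
    by (intro ballI card_mono[OF fin]) (auto simp: rejected_Suc)
  ultimately show ?thesis
    unfolding num_rejections_def using r(1) by (intro sum_strict_mono_ex1) blast+
qed

lemma stable_if_no_rejection:
  assumes t: "m * n \<le> t" and nr: "no_rejection (play t)"
  shows "stable n m UP UA (induced n m (play t))"
  unfolding stable_def
proof (intro notI, elim exE conjE)
  fix i j assume i: "i < n" and j: "j < m" and bl: "blocking UP UA (induced n m (play t)) i j"
  have "j \<in> rejected t i"
  proof -
    have learned: "propose t i = best ({..<m} - rejected t i) (UP i)"
      using propose_learned[OF t, of i] i by simp
    show ?thesis
    proof (cases "propose t i")
      case None
      then show ?thesis using learned j by (auto simp: best_eq_None_iff)
    next
      case (Some j')
      then have "partnerP (induced n m (play t)) i = Some j'"
        using no_rejection_matched[OF nr Some] by (simp add: partnerP_induced matched_def)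
      then have "UP i j' < UP i j" using bl by (simp add: blocking_def uopt_def)
      moreover have "best ({..<m} - rejected t i) (UP i) = Some j'" using learned Some by simp
      ultimately show ?thesis using j by (force dest: best_SomeD)
    qed
  qed
  then obtain k where k: "m * n \<le> k" "k < t" "propose k i = Some j" "payoffP k i = 0"
    unfolding rejected_def by blast
  obtain i' where i': "accept k j = Some i'" "UA j i < UA j i'"
    using rejection_by_better[OF k(1,3,4)] by blast
  obtain i'' where i'': "accept t j = Some i''" "UA j i' \<le> UA j i''"
    using accept_improves[OF _ k(1) i'(1), of t] k(2) by auto
  have "partnerA (induced n m (play t)) j = Some i''"
    using accept_range[OF i''(1)] i'' by (auto simp: partnerA_induced)
  then show False using bl i' i'' by (simp add: blocking_def uopt_def)
qed

lemma eventually_stable: "\<exists>T. \<forall>t\<ge>T. induced n m (play t) \<in> stable_matchings n m UP UA"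
proof -
  have "\<exists>t\<ge>m * n. no_rejection (play t)"
    using bounded_potential_stops[of "m * n" num_rejections "n * m" "\<lambda>t. no_rejection (play t)"]
      num_rejections_bounded num_rejections_increases by blast
  then obtain t0 where t0: "m * n \<le> t0" "no_rejection (play t0)" by blast
  show ?thesis
  proof (intro exI allI impI)
    fix t assume "t0 \<le> t"
    have "play t = play t0"
    proof (rule constant_from_fixed_point[where Q = no_rejection and r = play, OF _ t0(2) \<open>t0 \<le> t\<close>])
      fix t' assume "t0 \<le> t'" "no_rejection (play t')"
      then show "play (Suc t') = play t'" using play_Suc_eq t0(1) by simp
    qed
    then show "induced n m (play t) \<in> stable_matchings n m UP UA"
      using stable_if_no_rejection[OF t0] is_matching_induced by (simp add: stable_matchings_def)
  qed
qed

end

theorem theorem1: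
  fixes n m :: nat and \<delta> :: real
  assumes "0 < \<delta>" and "\<delta> \<le> 1"
  shows "\<exists>\<pi>P \<pi>A. valid_policyP m \<pi>P \<and> valid_policyA \<pi>A \<and>
     (\<forall>UP UA. market n m UP UA \<longrightarrow>
        (\<exists>T. \<forall>t\<ge>T. measure_pmf.prob (hist_pmf n m UP UA \<pi>P \<pi>A t)
              {h. h \<noteq> [] \<and> induced n m (last h) \<in> stable_matchings n m UP UA} > 1 - \<delta>))"
proof (rule exI, rule exI, intro conjI allI impI)
  show "valid_policyP m (\<lambda>ob. return_pmf (proposer_rule n m ob))"
    unfolding valid_policyP_def using proposer_rule_valid by simp
  show "valid_policyA (\<lambda>ob S. return_pmf (acceptor_rule n m ob S))"
    unfolding valid_policyA_def using acceptor_rule_valid by simp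
  fix UP UA assume "market n m UP UA"
  then interpret da_run n m UP UA by (rule da_run.intro)
  obtain T where T: "\<forall>t\<ge>T. induced n m (play t) \<in> stable_matchings n m UP UA"
    using eventually_stable by blast
  have stable_last: "hist t \<noteq> [] \<and> induced n m (last (hist t)) \<in> stable_matchings n m UP UA"
    if late: "Suc T \<le> t" for t
  proof -
    obtain t' where "t = Suc t'" "T \<le> t'" using late by (cases t) auto
    then show ?thesis using T by (simp add: play_def)
  qed
  show "\<exists>T. \<forall>t\<ge>T. measure_pmf.prob
      (hist_pmf n m UP UA (\<lambda>ob. return_pmf (proposer_rule n m ob)) (\<lambda>ob S. return_pmf (acceptor_rule n m ob S)) t)
      {h. h \<noteq> [] \<and> induced n m (last h) \<in> stable_matchings n m UP UA} > 1 - \<delta>"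
    using stable_last assms(1) by (intro exI[of _ "Suc T"] allI impI) (simp add: hist_pmf_deterministic)
qed

end
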